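(* Let $\Bbbk$ be a field with $\mathrm{char}(\Bbbk)\ne2$, $n\ge2$, $\mathbb{H}_{2^n}$ the Nichols Hopf algebra and $A$ a unital associative $\Bbbk$-algebra. If $\cdot:\mathbb{H}_{2^n}\otimes A\to A$ is a partial action of $\mathbb{H}_{2^n}$ on $A$ with $g\cdot1_A=1_A$, then $\cdot$ is a global action.
   Context: $\mathbb{H}_{2^n}$ is the Hopf algebra generated by $g,x_1,\dots,x_{n-1}$ with relations $g^2=1$, $x_i^2=0$, $x_ig=-gx_i$, $x_ix_j=-x_jx_i$, $g$ group-like, $\Delta(x_i)=x_i\otimes1+g\otimes x_i$, $\varepsilon(x_i)=0$. A partial action of a bialgebra $H$ on $A$ is a linear map $\cdot:H\otimes A\to A$ with $1_H\cdot a=a$, $h\cdot(ab)=(h_1\cdot a)(h_2\cdot b)$, $h\cdot(k\cdot a)=(h_1\cdot1_A)(h_2k\cdot a)$; it is global if moreover $h\cdot 1_A=\varepsilon(h)1_A$ for all $h$ (equivalently $h\cdot(k\cdot a)=hk\cdot a$). *)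

theory Defs
  imports Main
begin

text \<open>Basis of the Nichols Hopf algebra H_{2^n}: the pair (a, S) with a :: bool and
  S a subset of {1..<n} stands for the monomial g^a x_S, where x_S = x_{s1} x_{s2} ... x_{sk}
  with s1 < s2 < ... < sk the elements of S (x_S = 1 for S empty).\<close>

type_synonym hbasis = "bool \<times> nat set"

definition Bas :: "nat \<Rightarrow> hbasis set" where
  "Bas n = {(a, S). S \<subseteq> {1..<n}}"

text \<open>Structure constants of the multiplication: coefficient of the basis element c in
  the product (g^a x_S)(g^b x_T) = (-1)^(b|S| + inv(S,T)) g^(a+b) x_(S \<union> T) if S, T disjoint,
  and 0 otherwise.\<close>
definition mulc :: "hbasis \<Rightarrow> hbasis \<Rightarrow> hbasis \<Rightarrow> 'k::field" where
  "mulc p q c = (case p of (a, S) \<Rightarrow> case q of (b, T) \<Rightarrow>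
     (if S \<inter> T = {} \<and> c = (a \<noteq> b, S \<union> T)
      then (-1) ^ ((if b then card S else 0) + card {(s, t). s \<in> S \<and> t \<in> T \<and> t < s})
      else 0))"

text \<open>Structure constants of the comultiplication: coefficient of p \<otimes> q in
  Delta(g^a x_S) = sum over U \<subseteq> S, V = S - U of
  (-1)^#{(u,v). u \<in> U, v \<in> V, u < v} g^(a+|V|) x_U \<otimes> g^a x_V
  (the expansion of (g \<otimes> g)^a \<Prod>_(s \<in> S) (x_s \<otimes> 1 + g \<otimes> x_s)).\<close>
definition comc :: "hbasis \<Rightarrow> hbasis \<Rightarrow> hbasis \<Rightarrow> 'k::field" where
  "comc r p q = (case r of (a, S) \<Rightarrow> case p of (c, U) \<Rightarrow> case q of (d, V) \<Rightarrow>
     (if U \<subseteq> S \<and> V = S - U \<and> d = a \<and> c = (a \<noteq> odd (card V))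
      then (-1) ^ card {(u, v). u \<in> U \<and> v \<in> V \<and> u < v}
      else 0))"

definition epsc :: "hbasis \<Rightarrow> 'k::field" where
  "epsc p = (if snd p = {} then 1 else 0)"

definition bvec :: "hbasis \<Rightarrow> hbasis \<Rightarrow> 'k::field" where
  "bvec p = (\<lambda>r. if r = p then 1 else 0)"

definition hone :: "hbasis \<Rightarrow> 'k::field" where
  "hone = bvec (False, {})"

definition hmul :: "nat \<Rightarrow> (hbasis \<Rightarrow> 'k::field) \<Rightarrow> (hbasis \<Rightarrow> 'k) \<Rightarrow> hbasis \<Rightarrow> 'k" where
  "hmul n h k c = (\<Sum>p\<in>Bas n. \<Sum>q\<in>Bas n. h p * k q * mulc p q c)"

definition hcomul :: "nat \<Rightarrow> (hbasis \<Rightarrow> 'k::field) \<Rightarrow> hbasis \<Rightarrow> hbasis \<Rightarrow> 'k" where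
  "hcomul n h p q = (\<Sum>r\<in>Bas n. h r * comc r p q)"

definition heps :: "nat \<Rightarrow> (hbasis \<Rightarrow> 'k::field) \<Rightarrow> 'k" where
  "heps n h = (\<Sum>p\<in>Bas n. h p * epsc p)"

definition k_algebra :: "('k::field \<Rightarrow> 'a::{ring, monoid_mult} \<Rightarrow> 'a) \<Rightarrow> bool" where
  "k_algebra sm \<longleftrightarrow>
     (\<forall>c a b. sm c (a + b) = sm c a + sm c b) \<and>
     (\<forall>c d a. sm (c + d) a = sm c a + sm d a) \<and>
     (\<forall>c d a. sm (c * d) a = sm c (sm d a)) \<and>
     (\<forall>a. sm 1 a = a) \<and>
     (\<forall>c a b. sm c (a * b) = sm c a * b) \<and>
     (\<forall>c a b. sm c (a * b) = a * sm c b)"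

text \<open>A linear map H_{2^n} \<otimes> A \<rightarrow> A is given by its values act p on basis elements p,
  each act p being k-linear; it is extended linearly in the H-argument.\<close>
definition hact :: "nat \<Rightarrow> ('k::field \<Rightarrow> 'a \<Rightarrow> 'a) \<Rightarrow> (hbasis \<Rightarrow> 'a \<Rightarrow> 'a)
    \<Rightarrow> (hbasis \<Rightarrow> 'k) \<Rightarrow> 'a::{ring, monoid_mult} \<Rightarrow> 'a" where
  "hact n sm act h a = (\<Sum>p\<in>Bas n. sm (h p) (act p a))"

definition lin_action :: "nat \<Rightarrow> ('k::field \<Rightarrow> 'a::{ring, monoid_mult} \<Rightarrow> 'a)
    \<Rightarrow> (hbasis \<Rightarrow> 'a \<Rightarrow> 'a) \<Rightarrow> bool" where
  "lin_action n sm act \<longleftrightarrow>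
     (\<forall>p\<in>Bas n. (\<forall>a b. act p (a + b) = act p a + act p b) \<and>
                (\<forall>c a. act p (sm c a) = sm c (act p a)))"

definition partial_action :: "nat \<Rightarrow> ('k::field \<Rightarrow> 'a::{ring, monoid_mult} \<Rightarrow> 'a)
    \<Rightarrow> (hbasis \<Rightarrow> 'a \<Rightarrow> 'a) \<Rightarrow> bool" where
  "partial_action n sm act \<longleftrightarrow>
     lin_action n sm act \<and>
     (\<forall>a. hact n sm act hone a = a) \<and>
     (\<forall>h a b. hact n sm act h (a * b) =
        (\<Sum>p\<in>Bas n. \<Sum>q\<in>Bas n. sm (hcomul n h p q) (act p a * act q b))) \<and>
     (\<forall>h k a. hact n sm act h (hact n sm act k a) =
        (\<Sum>p\<in>Bas n. \<Sum>q\<in>Bas n.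
           sm (hcomul n h p q) (act p 1 * hact n sm act (hmul n (bvec q) k) a)))"

definition global_action :: "nat \<Rightarrow> ('k::field \<Rightarrow> 'a::{ring, monoid_mult} \<Rightarrow> 'a)
    \<Rightarrow> (hbasis \<Rightarrow> 'a \<Rightarrow> 'a) \<Rightarrow> bool" where
  "global_action n sm act \<longleftrightarrow>
     partial_action n sm act \<and> (\<forall>h. hact n sm act h 1 = sm (heps n h) 1)"

end

theory Submission
  imports Defs
begin

text \<open>Write g^a x_S for the basis element (a, S). Since
  Delta(g^a x_S) = sum over U \<subseteq> S of \<plusminus> g^(a + |S - U|) x_U \<otimes> g^a x_(S - U),
  multiplicativity applied to 1 = 1 * 1 writes y = g^a x_S \<cdot> 1 as the sum of the two
  extreme terms y (g^a \<cdot> 1) and (g^(a + |S|) \<cdot> 1) y and of terms containing g^c x_U \<cdot> 1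
  with {} \<noteq> U \<subset> S. As g \<cdot> 1 = 1 = 1 \<cdot> 1, induction on S gives y = y + y, hence
  y = 0 = \<epsilon>(g^a x_S) 1 whenever S \<noteq> {}. This cancellation happens in the additive group
  of A.\<close>

lemma finite_Bas: "finite (Bas n)"
proof -
  have "Bas n = UNIV \<times> Pow {1..<n}" unfolding Bas_def by auto
  then show ?thesis by simp
qed

lemma sm_zero_scalar:
  assumes "k_algebra sm" shows "sm 0 x = 0"
proof -
  have "sm (0 + 0) x = sm 0 x + sm 0 x" using assms unfolding k_algebra_def by blast
  then show ?thesis by simp
qed

lemma sm_zero_vector:
  assumes "k_algebra sm" shows "sm c 0 = 0"
proof -
  have "sm c (0 + 0) = sm c 0 + sm c 0" using assms unfolding k_algebra_def by blast
  then show ?thesis by simp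
qed

lemma sm_one_scalar:
  assumes "k_algebra sm" shows "sm 1 x = x"
  using assms unfolding k_algebra_def by blast

lemma sm_sum_scalar:
  assumes "k_algebra sm" and "finite A"
  shows "sm (sum f A) x = (\<Sum>p\<in>A. sm (f p) x)"
  using assms(2)
proof (induction A rule: finite_induct)
  case empty
  then show ?case using sm_zero_scalar[OF assms(1)] by simp
next
  case (insert y F)
  have "sm (f y + sum f F) x = sm (f y) x + sm (sum f F) x"
    using assms(1) unfolding k_algebra_def by blast
  then show ?case using insert by simp
qed

lemma hact_bvec:
  assumes "k_algebra sm" and "p \<in> Bas n"
  shows "hact n sm act (bvec p) a = act p a"
proof -
  have "hact n sm act (bvec p) a = (\<Sum>q\<in>Bas n. if p = q then act p a else 0)"
    unfolding hact_def bvec_def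
    by (rule sum.cong) (auto simp: sm_zero_scalar[OF assms(1)] sm_one_scalar[OF assms(1)])
  also have "\<dots> = act p a" using assms(2) finite_Bas by simp
  finally show ?thesis .
qed

lemma hcomul_bvec:
  assumes "p \<in> Bas n"
  shows "hcomul n (bvec p) p' q = (comc p p' q :: 'k::field)"
proof -
  have "hcomul n (bvec p) p' q = (\<Sum>r\<in>Bas n. if p = r then comc p p' q else (0::'k))"
    unfolding hcomul_def bvec_def by (rule sum.cong) auto
  also have "\<dots> = comc p p' q" using assms finite_Bas by simp
  finally show ?thesis .
qed

lemma comc_nonzero_imp:
  assumes "comc (a, S) (c, U) (d, V) \<noteq> (0::'k::field)"
  shows "U \<subseteq> S \<and> V = S - U \<and> d = a \<and> c = (a \<noteq> odd (card V))"
  using assms unfolding comc_def by (auto split: if_splits)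

lemma partial_action_act_mult:
  fixes sm :: "'k::field \<Rightarrow> 'a::{ring, monoid_mult} \<Rightarrow> 'a"
  assumes "k_algebra sm" and "partial_action n sm act" and "p \<in> Bas n"
  shows "act p (x * y) =
    (\<Sum>(p', q)\<in>Bas n \<times> Bas n. sm (comc p p' q :: 'k) (act p' x * act q y))"
proof -
  have "act p (x * y) = hact n sm act (bvec p) (x * y)"
    using hact_bvec[OF assms(1,3)] by simp
  also have "\<dots> = (\<Sum>p'\<in>Bas n. \<Sum>q\<in>Bas n. sm (hcomul n (bvec p) p' q) (act p' x * act q y))"
    using assms(2) unfolding partial_action_def by blast
  finally show ?thesis
    by (simp add: hcomul_bvec[OF assms(3)] sum.cartesian_product)
qed

lemma partial_action_act_group_like_one:
  fixes sm :: "'k::field \<Rightarrow> 'a::{ring, monoid_mult} \<Rightarrow> 'a"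
  assumes "k_algebra sm" and "partial_action n sm act" and "act (True, {}) 1 = 1"
  shows "act (b, {}) 1 = 1"
proof (cases b)
  case True
  then show ?thesis using assms(3) by simp
next
  case False
  have "(False, {}) \<in> Bas n" unfolding Bas_def by auto
  then have "hact n sm act hone 1 = act (False, {}) 1"
    unfolding hone_def using hact_bvec[OF assms(1)] by blast
  moreover have "hact n sm act hone 1 = 1"
    using assms(2) unfolding partial_action_def by blast
  ultimately show ?thesis using False by simp
qed

lemma act_one_eq_double:
  fixes sm :: "'k::field \<Rightarrow> 'a::{ring, monoid_mult} \<Rightarrow> 'a"
  assumes km: "k_algebra sm" and pa: "partial_action n sm act"
    and group_like: "\<And>b. act (b, {}) 1 = 1"
    and S: "S \<subseteq> {1..<n}" "S \<noteq> {}"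
    and proper: "\<And>c U. U \<subset> S \<Longrightarrow> U \<noteq> {} \<Longrightarrow> act (c, U) 1 = 0"
  shows "act (a, S) 1 = act (a, S) 1 + act (a, S) 1"
proof -
  define f where "f = (\<lambda>(p', q). sm (comc (a, S) p' q :: 'k) (act p' 1 * act q 1))"
  define T where "T = {((a, S), (a, {})), ((a \<noteq> odd (card S), {}), (a, S))}"
  have pB: "(a, S) \<in> Bas n" unfolding Bas_def using S by auto
  have "act (a, S) 1 = sum f (Bas n \<times> Bas n)"
    using partial_action_act_mult[OF km pa pB, of 1 1] unfolding f_def by simp
  also have "\<dots> = sum f T"
  proof (rule sum.mono_neutral_right)
    show "finite (Bas n \<times> Bas n)" using finite_Bas by simp
    show "T \<subseteq> Bas n \<times> Bas n" unfolding T_def Bas_def using S by auto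
    show "\<forall>x\<in>Bas n \<times> Bas n - T. f x = 0"
    proof
      fix x assume x: "x \<in> Bas n \<times> Bas n - T"
      obtain c U d V where x_eq: "x = ((c, U), (d, V))" by (cases x) auto
      show "f x = 0"
      proof (cases "comc (a, S) (c, U) (d, V) = (0::'k)")
        case True
        then show ?thesis unfolding f_def x_eq using sm_zero_scalar[OF km] by simp
      next
        case False
        then have UV: "U \<subseteq> S" "V = S - U" "d = a" "c = (a \<noteq> odd (card V))"
          using comc_nonzero_imp by blast+
        have "U \<noteq> {}" and "U \<noteq> S" using x UV unfolding x_eq T_def by auto
        with UV have "act (c, U) 1 = 0" using proper by blast
        then show ?thesis unfolding f_def x_eq using sm_zero_vector[OF km] by simp
      qed
    qed
  qed
  also have "\<dots> = act (a, S) 1 + act (a, S) 1"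
    using S(2) unfolding T_def f_def
    by (simp add: comc_def group_like sm_one_scalar[OF km])
  finally show ?thesis .
qed

lemma partial_action_act_nilpotent_one:
  fixes sm :: "'k::field \<Rightarrow> 'a::{ring, monoid_mult} \<Rightarrow> 'a"
  assumes km: "k_algebra sm" and pa: "partial_action n sm act"
    and group_like: "\<And>b. act (b, {}) 1 = 1"
    and "S \<subseteq> {1..<n}" and "S \<noteq> {}"
  shows "act (a, S) 1 = 0"
proof -
  have "finite S" using assms(4) finite_subset by blast
  then show ?thesis using assms(4,5)
  proof (induction S arbitrary: a rule: finite_psubset_induct)
    case (psubset S)
    have "act (a, S) 1 = act (a, S) 1 + act (a, S) 1"
      using act_one_eq_double[OF km pa group_like psubset.prems] psubset.IH psubset.prems(1)
      by blast
    then show ?case by simp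
  qed
qed

lemma partial_action_act_one:
  fixes sm :: "'k::field \<Rightarrow> 'a::{ring, monoid_mult} \<Rightarrow> 'a"
  assumes km: "k_algebra sm" and pa: "partial_action n sm act"
    and group_like: "\<And>b. act (b, {}) 1 = 1"
    and "p \<in> Bas n"
  shows "act p 1 = sm (epsc p) 1"
proof -
  obtain b S where p: "p = (b, S)" and S: "S \<subseteq> {1..<n}"
    using assms(4) unfolding Bas_def by auto
  show ?thesis
  proof (cases "S = {}")
    case True
    then show ?thesis using p group_like sm_one_scalar[OF km] by (simp add: epsc_def)
  next
    case False
    then show ?thesis
      using p S partial_action_act_nilpotent_one[OF km pa group_like] sm_zero_scalar[OF km]
      by (simp add: epsc_def)
  qed
qed

lemma partial_action_hact_one:
  fixes sm :: "'k::field \<Rightarrow> 'a::{ring, monoid_mult} \<Rightarrow> 'a"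
  assumes km: "k_algebra sm" and pa: "partial_action n sm act"
    and group_like: "\<And>b. act (b, {}) 1 = 1"
  shows "hact n sm act h 1 = sm (heps n h) 1"
proof -
  have "hact n sm act h 1 = (\<Sum>p\<in>Bas n. sm (h p) (sm (epsc p) 1))"
    unfolding hact_def using partial_action_act_one[OF km pa group_like] by simp
  also have "\<dots> = (\<Sum>p\<in>Bas n. sm (h p * epsc p) 1)"
    using km unfolding k_algebra_def by simp
  also have "\<dots> = sm (heps n h) 1"
    unfolding heps_def using sm_sum_scalar[OF km finite_Bas] by simp
  finally show ?thesis .
qed

theorem proposition4p2:
  fixes n :: nat
    and sm :: "'k::field \<Rightarrow> 'a::{ring, monoid_mult} \<Rightarrow> 'a"
    and act :: "hbasis \<Rightarrow> 'a \<Rightarrow> 'a"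
  assumes "(2::'k) \<noteq> 0"
    and "n \<ge> 2"
    and "k_algebra sm"
    and "partial_action n sm act"
    and "act (True, {}) 1 = 1"
  shows "global_action n sm act"
proof -
  have "act (b, {}) 1 = 1" for b
    using partial_action_act_group_like_one[OF assms(3-5)] .
  then have "hact n sm act h 1 = sm (heps n h) 1" for h
    using partial_action_hact_one[OF assms(3,4)] by blast
  then show ?thesis unfolding global_action_def using assms(4) by blast
qed

end
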